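(* Let $k\ge 2$, $\tau=1000k$, $\rho=1-\frac{1}{10\tau}$, let $g:\{0,1\}^n\to\{0,1\}$ be a $k$-term DNF and $y\in\{0,1\}^n$. Then for any set $S\subseteq[n]$ consisting entirely of indices that are morally irrelevant for $g$, \[\left|T_\rho g(y)-T_\rho g(y^{\oplus S})\right|\le\frac{1}{k^{50}},\] where $y^{\oplus S}$ is obtained from $y$ by flipping the bits with indices in $S$.
   Context: A term is short if it has at most $\tau$ literals, medium if it has between $\tau+1$ and $1000\tau\log k$ literals, and long if it has more than $1000\tau\log k$ literals. An index $i\in[n]$ is morally irrelevant for $g$ if no short or medium term of $g$ contains $x_i$ or $\overline{x_i}$. For $x\in\{0,1\}^n$, $\mathbf{y}\sim N_\rho(x)$ means each bit independently has $\mathbf{y}_i=x_i$ with probability $\rho$ and $1-x_i$ with probability $1-\rho$; $T_\rho g(x)=\mathbb{E}_{\mathbf{y}\sim N_\rho(x)}[g(\mathbf{y})]$. *)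

theory Defs
  imports Complex_Main
begin

text \<open>Points of the Boolean cube {0,1}^n are bool lists of length n (True = 1);
  indices are 0..n-1. A literal is a pair (i, b): it is x_i if b = True and
  the negation of x_i if b = False. A term is a finite set of literals
  (their conjunction); a DNF is a list of terms (their disjunction).\<close>

type_synonym literal = "nat \<times> bool"
type_synonym dnf_term = "literal set"
type_synonym dnf = "dnf_term list"

definition cube :: "nat \<Rightarrow> bool list set" where
  "cube n = {x. length x = n}"

definition lit_sat :: "bool list \<Rightarrow> literal \<Rightarrow> bool" where
  "lit_sat x l = (x ! fst l = snd l)"

definition term_sat :: "bool list \<Rightarrow> dnf_term \<Rightarrow> bool" where
  "term_sat x t = (\<forall>l\<in>t. lit_sat x l)"

definition dnf_eval :: "dnf \<Rightarrow> bool list \<Rightarrow> real" where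
  "dnf_eval F x = (if \<exists>t\<in>set F. term_sat x t then 1 else 0)"

definition is_kterm_dnf :: "nat \<Rightarrow> nat \<Rightarrow> dnf \<Rightarrow> bool" where
  "is_kterm_dnf n k F = (length F \<le> k \<and>
     (\<forall>t\<in>set F. finite t \<and> (\<forall>l\<in>t. fst l < n)))"

definition short_or_medium :: "real \<Rightarrow> nat \<Rightarrow> dnf_term \<Rightarrow> bool" where
  "short_or_medium \<tau> k t = (real (card t) \<le> 1000 * \<tau> * log 2 (real k))"

definition morally_irrelevant :: "real \<Rightarrow> nat \<Rightarrow> dnf \<Rightarrow> nat \<Rightarrow> bool" where
  "morally_irrelevant \<tau> k F i =
     (\<forall>t\<in>set F. short_or_medium \<tau> k t \<longrightarrow> (i, True) \<notin> t \<and> (i, False) \<notin> t)"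

definition noise_prob :: "real \<Rightarrow> nat \<Rightarrow> bool list \<Rightarrow> bool list \<Rightarrow> real" where
  "noise_prob \<rho> n x y = (\<Prod>i<n. if y ! i = x ! i then \<rho> else 1 - \<rho>)"

definition T_noise :: "real \<Rightarrow> nat \<Rightarrow> (bool list \<Rightarrow> real) \<Rightarrow> bool list \<Rightarrow> real" where
  "T_noise \<rho> n g x = (\<Sum>y\<in>cube n. noise_prob \<rho> n x y * g y)"

definition flip_set :: "nat set \<Rightarrow> bool list \<Rightarrow> bool list" where
  "flip_set S y = map (\<lambda>j. if j \<in> S then \<not> (y ! j) else y ! j) [0..<length y]"

end

(* Split F into its short/medium terms G and its long terms. Morally irrelevant variables do not
   occur in G, so T_rho G takes the same value at y and at the flipped point. Pointwise
   G <= F <= G + (sum of the indicators of the long terms), and under rho-noise a term with m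
   literals is satisfied with probability at most rho^m. For a long term rho^m <= k^-100, and
   there are at most k terms, so at both points T_rho F lies within k^-99 <= k^-50 above
   T_rho G. *)

theory Submission
  imports Defs
begin

lemma cube_Suc: "cube (Suc n) = (\<lambda>(b, z). b # z) ` (UNIV \<times> cube n)"
  by (auto simp: cube_def length_Suc_conv image_iff)

lemma sum_cube_prod:
  "(\<Sum>z\<in>cube n. \<Prod>i<n. f i (z ! i)) = (\<Prod>i<n. f i True + f i False :: 'a :: comm_semiring_1)"
proof (induction n arbitrary: f)
  case 0
  have "cube 0 = {[]}" by (auto simp: cube_def)
  then show ?case by simp
next
  case (Suc n)
  have "(\<Sum>z\<in>cube (Suc n). \<Prod>i<Suc n. f i (z ! i))
      = (\<Sum>(b, z)\<in>UNIV \<times> cube n. f 0 b * (\<Prod>i<n. f (Suc i) (z ! i)))"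
    unfolding cube_Suc
    by (subst sum.reindex)
      (auto simp: inj_on_def split_def prod.lessThan_Suc_shift simp del: prod.lessThan_Suc)
  also have "\<dots> = (\<Sum>b\<in>UNIV. f 0 b * (\<Sum>z\<in>cube n. \<Prod>i<n. f (Suc i) (z ! i)))"
    by (simp add: sum.cartesian_product[symmetric] sum_distrib_left)
  also have "\<dots> = (\<Prod>i<Suc n. f i True + f i False)"
    by (simp add: Suc.IH[of "\<lambda>i. f (Suc i)"] UNIV_bool prod.lessThan_Suc_shift distrib_right
        add.commute del: prod.lessThan_Suc)
  finally show ?case .
qed

lemma term_sat_iff_no_falsified_literal:
  assumes "\<forall>l\<in>t. fst l < length z"
  shows "term_sat z t \<longleftrightarrow> (\<forall>i<length z. (i, \<not> z ! i) \<notin> t)"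
proof -
  have "lit_sat z l \<longleftrightarrow> l \<noteq> (fst l, \<not> z ! fst l)" for l
    by (cases l) (auto simp: lit_sat_def)
  then show ?thesis
    using assms unfolding term_sat_def by (metis fst_conv)
qed

lemma card_literals_on_var:
  fixes t :: dnf_term
  shows "card {l\<in>t. fst l = i} = of_bool ((i, True) \<in> t) + of_bool ((i, False) \<in> t)"
proof -
  have "{l\<in>t. fst l = i} = Pair i ` {b. (i, b) \<in> t}" by force
  then have "card {l\<in>t. fst l = i} = card {b. (i, b) \<in> t}"
    by (simp add: card_image inj_on_def)
  also have "\<dots> = of_bool ((i, True) \<in> t) + of_bool ((i, False) \<in> t)"
  proof -
    have "{b. (i, b) \<in> t}
        = (if (i, True) \<in> t then {True} else {}) \<union> (if (i, False) \<in> t then {False} else {})"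
      by (auto; metis (full_types))
    then show ?thesis by simp
  qed
  finally show ?thesis .
qed

lemma card_eq_sum_card_literals_on_var:
  fixes t :: dnf_term
  assumes "finite t" "\<forall>l\<in>t. fst l < n"
  shows "card t = (\<Sum>i<n. card {l\<in>t. fst l = i})"
proof -
  have "(\<Sum>i<n. card {l\<in>t. fst l = i}) = (\<Sum>i<n. \<Sum>l\<in>{l\<in>t. fst l = i}. 1)" by simp
  also have "\<dots> = (\<Sum>l\<in>t. 1)" by (rule sum.group) (use assms in auto)
  finally show ?thesis by simp
qed

lemma noise_prob_nonneg: "0 \<le> \<rho> \<Longrightarrow> \<rho> \<le> 1 \<Longrightarrow> 0 \<le> noise_prob \<rho> n x z"
  unfolding noise_prob_def by (intro prod_nonneg) auto

lemma T_noise_mono: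
  assumes "0 \<le> \<rho>" "\<rho> \<le> 1" "\<And>z. z \<in> cube n \<Longrightarrow> g z \<le> h z"
  shows "T_noise \<rho> n g x \<le> T_noise \<rho> n h x"
  unfolding T_noise_def
  by (intro sum_mono mult_left_mono assms noise_prob_nonneg)

lemma T_noise_add:
  "T_noise \<rho> n (\<lambda>z. g z + h z) x = T_noise \<rho> n g x + T_noise \<rho> n h x"
  by (simp add: T_noise_def distrib_left sum.distrib)

lemma T_noise_sum:
  "T_noise \<rho> n (\<lambda>z. \<Sum>i\<in>I. f i z) x = (\<Sum>i\<in>I. T_noise \<rho> n (f i) x)"
  unfolding T_noise_def sum_distrib_left by (rule sum.swap)

lemma T_noise_term_le:
  assumes "1/2 \<le> \<rho>" "\<rho> \<le> 1" "x \<in> cube n" "finite t" "\<forall>l\<in>t. fst l < n"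
  shows "T_noise \<rho> n (dnf_eval [t]) x \<le> \<rho> ^ card t"
proof -
  \<comment> \<open>The noise is a product distribution and satisfying t is a condition on each coordinate
    separately, so the probability factorises; a coordinate carrying a literal of t contributes
    at most \<rho>, since 1 - \<rho> \<le> \<rho>.\<close>
  define f where "f i b = (if b = x ! i then \<rho> else 1 - \<rho>) * of_bool ((i, \<not> b) \<notin> t)" for i b
  have "dnf_eval [t] z = (\<Prod>i<n. of_bool ((i, \<not> z ! i) \<notin> t))" if "z \<in> cube n" for z
    using that assms(5) term_sat_iff_no_falsified_literal[of t z]
    by (auto simp: dnf_eval_def cube_def prod_zero)
  then have "T_noise \<rho> n (dnf_eval [t]) x = (\<Sum>z\<in>cube n. \<Prod>i<n. f i (z ! i))"
    unfolding T_noise_def noise_prob_def f_def prod.distrib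
    by (intro sum.cong) (auto simp: eq_commute)
  also have "\<dots> = (\<Prod>i<n. f i True + f i False)" by (rule sum_cube_prod)
  also have "\<dots> \<le> (\<Prod>i<n. \<rho> ^ card {l\<in>t. fst l = i})"
    using assms(1,2) unfolding card_literals_on_var f_def
    by (intro prod_mono) (auto simp: power2_eq_square)
  also have "\<dots> = \<rho> ^ card t"
    using assms(4,5) by (simp add: card_eq_sum_card_literals_on_var power_sum)
  finally show ?thesis .
qed

lemma length_flip_set [simp]: "length (flip_set S z) = length z"
  by (simp add: flip_set_def)

lemma nth_flip_set:
  "i < length z \<Longrightarrow> flip_set S z ! i = (if i \<in> S then \<not> z ! i else z ! i)"
  by (simp add: flip_set_def)

lemma flip_set_flip_set [simp]: "flip_set S (flip_set S z) = z"
  by (rule nth_equalityI) (auto simp: nth_flip_set)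

lemma flip_set_in_cube [simp]: "flip_set S z \<in> cube n \<longleftrightarrow> z \<in> cube n"
  by (simp add: cube_def)

lemma noise_prob_flip_set:
  assumes "x \<in> cube n" "z \<in> cube n"
  shows "noise_prob \<rho> n (flip_set S x) z = noise_prob \<rho> n x (flip_set S z)"
  unfolding noise_prob_def
  by (rule prod.cong) (use assms in \<open>auto simp: cube_def nth_flip_set\<close>)

lemma T_noise_flip_set_eq:
  assumes "x \<in> cube n" and "\<And>z. z \<in> cube n \<Longrightarrow> g (flip_set S z) = g z"
  shows "T_noise \<rho> n g (flip_set S x) = T_noise \<rho> n g x"
  unfolding T_noise_def
  by (rule sum.reindex_bij_witness[of _ "flip_set S" "flip_set S"])
    (auto simp: noise_prob_flip_set assms)

lemma term_sat_flip_set: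
  assumes "\<forall>l\<in>t. fst l < length z \<and> fst l \<notin> S"
  shows "term_sat (flip_set S z) t = term_sat z t"
  using assms by (simp add: term_sat_def lit_sat_def nth_flip_set)

lemma dnf_eval_flip_set:
  assumes "\<forall>t\<in>set F. \<forall>l\<in>t. fst l < length z \<and> fst l \<notin> S"
  shows "dnf_eval F (flip_set S z) = dnf_eval F z"
  using assms by (simp add: dnf_eval_def term_sat_flip_set)

lemma morally_irrelevant_not_in_short_or_medium:
  assumes "morally_irrelevant \<tau> k F i" "t \<in> set F" "short_or_medium \<tau> k t" "l \<in> t"
  shows "fst l \<noteq> i"
  using assms by (cases l; cases "snd l") (auto simp: morally_irrelevant_def)

lemma dnf_eval_filter_le: "dnf_eval (filter P F) z \<le> dnf_eval F z"
  by (auto simp: dnf_eval_def)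

lemma dnf_eval_le_sum_terms: "dnf_eval F z \<le> (\<Sum>t\<in>set F. dnf_eval [t] z)"
proof (cases "\<exists>t\<in>set F. term_sat z t")
  case True
  then obtain t where "t \<in> set F" "term_sat z t" by blast
  then have "dnf_eval [t] z \<le> (\<Sum>t\<in>set F. dnf_eval [t] z)"
    by (intro member_le_sum) (auto simp: dnf_eval_def)
  with \<open>term_sat z t\<close> show ?thesis by (simp add: dnf_eval_def)
next
  case False
  then show ?thesis by (simp add: dnf_eval_def sum_nonneg)
qed

lemma dnf_eval_le_filter_add:
  "dnf_eval F z \<le> dnf_eval (filter P F) z + dnf_eval (filter (Not \<circ> P) F) z"
  by (auto simp: dnf_eval_def)

lemma T_noise_dnf_le_filter_add:
  assumes "1/2 \<le> \<rho>" "\<rho> \<le> 1" "x \<in> cube n" "is_kterm_dnf n k F" "0 \<le> \<epsilon>"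
    and long: "\<And>t. t \<in> set F \<Longrightarrow> \<not> P t \<Longrightarrow> \<rho> ^ card t \<le> \<epsilon>"
  shows "T_noise \<rho> n (dnf_eval F) x \<le> T_noise \<rho> n (dnf_eval (filter P F)) x + real k * \<epsilon>"
proof -
  let ?G = "filter P F" and ?L = "set (filter (Not \<circ> P) F)"
  have "dnf_eval F z \<le> dnf_eval ?G z + (\<Sum>t\<in>?L. dnf_eval [t] z)" for z
    using dnf_eval_le_filter_add[of F z P] dnf_eval_le_sum_terms[of "filter (Not \<circ> P) F" z]
    by linarith
  then have "T_noise \<rho> n (dnf_eval F) x
      \<le> T_noise \<rho> n (\<lambda>z. dnf_eval ?G z + (\<Sum>t\<in>?L. dnf_eval [t] z)) x"
    using assms(1,2) by (intro T_noise_mono) auto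
  also have "\<dots> = T_noise \<rho> n (dnf_eval ?G) x + (\<Sum>t\<in>?L. T_noise \<rho> n (dnf_eval [t]) x)"
    by (simp add: T_noise_add T_noise_sum)
  also have "\<dots> \<le> T_noise \<rho> n (dnf_eval ?G) x + real (card ?L) * \<epsilon>"
  proof -
    have "T_noise \<rho> n (dnf_eval [t]) x \<le> \<epsilon>" if "t \<in> ?L" for t
      using that assms(1-4) long T_noise_term_le[of \<rho> x n t]
      by (fastforce simp: is_kterm_dnf_def)
    then show ?thesis by (intro add_left_mono sum_bounded_above)
  qed
  also have "\<dots> \<le> T_noise \<rho> n (dnf_eval ?G) x + real k * \<epsilon>"
  proof -
    have "card ?L \<le> length (filter (Not \<circ> P) F)" by (rule card_length)
    also have "\<dots> \<le> length F" by (rule length_filter_le)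
    also have "\<dots> \<le> k" using assms(4) by (simp add: is_kterm_dnf_def)
    finally show ?thesis using assms(5) by (simp add: mult_right_mono)
  qed
  finally show ?thesis .
qed

lemma noise_rate_pow_le:
  fixes k m :: nat
  assumes "k \<ge> 1" "\<tau> \<ge> 1" "\<rho> = 1 - 1 / (10 * \<tau>)" "real m > 1000 * \<tau> * log 2 k"
  shows "\<rho> ^ m \<le> 1 / real k ^ 100"
proof -
  have "\<rho> \<le> exp (- 1 / (10 * \<tau>))"
    using exp_ge_add_one_self[of "- 1 / (10 * \<tau>)"] assms(3) by simp
  moreover have "1 / (10 * \<tau>) \<le> 1" using assms(2) by simp
  then have "0 \<le> \<rho>" using assms(3) by linarith
  ultimately have "\<rho> ^ m \<le> exp (- 1 / (10 * \<tau>)) ^ m" by (rule power_mono)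
  also have "\<dots> = exp (- (real m / (10 * \<tau>)))"
    by (simp add: exp_of_nat_mult[symmetric])
  also have "\<dots> \<le> exp (- (100 * ln k))"
  proof -
    have "ln k \<le> log 2 k"
      using assms(1) ln_2_less_1 by (simp add: log_def field_simps mult_left_le)
    also have "\<dots> \<le> real m / (10 * \<tau>) / 100"
      using assms(2,4) by (simp add: field_simps)
    finally show ?thesis by simp
  qed
  also have "\<dots> = 1 / real k ^ 100"
  proof -
    have "exp (100 * ln k) = real k powr 100" using assms(1) by (simp add: powr_def)
    then show ?thesis using assms(1) by (simp add: exp_minus inverse_eq_divide powr_realpow)
  qed
  finally show ?thesis .
qed

theorem claim6p7:
  fixes n k :: nat and \<tau> \<rho> :: real and F :: dnf and y :: "bool list" and S :: "nat set"
  assumes "k \<ge> 2"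
    and "\<tau> = 1000 * real k"
    and "\<rho> = 1 - 1 / (10 * \<tau>)"
    and "is_kterm_dnf n k F"
    and "y \<in> cube n"
    and "S \<subseteq> {0..<n}"
    and "\<forall>i\<in>S. morally_irrelevant \<tau> k F i"
  shows "\<bar>T_noise \<rho> n (dnf_eval F) y - T_noise \<rho> n (dnf_eval F) (flip_set S y)\<bar>
           \<le> 1 / real k ^ 50"
proof -
  let ?G = "filter (short_or_medium \<tau> k) F" and ?\<epsilon> = "1 / real k ^ 100"
  have "0 \<le> 1 / (10 * \<tau>)" "1 / (10 * \<tau>) \<le> 1/2" using assms(1,2) by simp_all
  then have \<rho>: "1/2 \<le> \<rho>" "\<rho> \<le> 1" using assms(3) by linarith+
  have long: "\<rho> ^ card t \<le> ?\<epsilon>" if "\<not> short_or_medium \<tau> k t" for t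
    using that assms(1-3) by (intro noise_rate_pow_le) (auto simp: short_or_medium_def)
  have sandwich: "T_noise \<rho> n (dnf_eval ?G) x \<le> T_noise \<rho> n (dnf_eval F) x
      \<and> T_noise \<rho> n (dnf_eval F) x \<le> T_noise \<rho> n (dnf_eval ?G) x + real k * ?\<epsilon>"
    if "x \<in> cube n" for x
    using \<rho> that assms(4) long dnf_eval_filter_le
    by (intro conjI T_noise_mono T_noise_dnf_le_filter_add) auto
  have "T_noise \<rho> n (dnf_eval ?G) (flip_set S y) = T_noise \<rho> n (dnf_eval ?G) y"
  proof -
    have "dnf_eval ?G (flip_set S z) = dnf_eval ?G z" if "z \<in> cube n" for z
      using that assms(4,7) morally_irrelevant_not_in_short_or_medium
      by (intro dnf_eval_flip_set) (fastforce simp: is_kterm_dnf_def cube_def)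
    then show ?thesis by (rule T_noise_flip_set_eq[OF assms(5)])
  qed
  moreover have "real k * ?\<epsilon> \<le> 1 / real k ^ 50"
  proof -
    have "real k * real k ^ 50 \<le> real k ^ 100"
      using power_increasing[of 51 100 "real k"] assms(1)
      by (simp add: power_Suc[symmetric] del: power_Suc)
    then show ?thesis using assms(1) by (simp add: field_simps)
  qed
  ultimately show ?thesis
    using sandwich[OF assms(5)] sandwich[of "flip_set S y"] assms(5) by (simp add: abs_le_iff)
qed

end
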